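(* Let $\mathfrak{I}=(\mathcal{I},\mathcal{F},\pi)$ be a feature-enriched interpretation and let $A_1,A_2,B_1,B_2$ be natural concepts in $\mathfrak{I}$. Suppose that the analogical proportion $\varphi(A_1):\varphi(A_2)::\varphi(B_1):\varphi(B_2)$ holds and that $\mathfrak{I}$ satisfies the concept inclusion $A_1\sqsubseteq B_1$. Then $\mathfrak{I}$ also satisfies $A_2\sqsubseteq B_2$.
   Context: A feature-enriched interpretation is a tuple $\mathfrak{I}=(\mathcal{I},\mathcal{F},\pi)$ where $\mathcal{I}=(\Delta^{\mathcal{I}},\cdot^{\mathcal{I}})$ is a classical description logic interpretation, $\mathcal{F}$ is a finite set of features, and $\pi:\Delta^{\mathcal{I}}\to 2^{\mathcal{F}}$ satisfies: (1) $\pi(d)\subsetneq\mathcal{F}$ for every $d\in\Delta^{\mathcal{I}}$; (2) for every $F\subsetneq\mathcal{F}$ there is $d\in\Delta^{\mathcal{I}}$ with $\pi(d)=F$. For a concept $C$, $\varphi(C)=\bigcap\{\pi(d)\mid d\in C^{\mathcal{I}}\}$ (so $\varphi(C)=\mathcal{F}$ if $C^{\mathcal{I}}=\emptyset$). A concept $N$ is natural in $\mathfrak{I}$ when it is fully specified by its features, i.e. $N^{\mathcal{I}}=\{d\in\Delta^{\mathcal{I}}\mid \varphi(N)\subseteq\pi(d)\}$. $\mathfrak{I}$ satisfies a concept inclusion $C\sqsubseteq D$ if $C^{\mathcal{I}}\subseteq D^{\mathcal{I}}$. For sets $S_1,S_2,S_3,S_4$, the analogical proportion $S_1:S_2::S_3:S_4$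 holds iff $S_1\setminus S_2=S_3\setminus S_4$ and $S_2\setminus S_1=S_4\setminus S_3$. *)

theory Defs
  imports Main
begin

text \<open>Concepts are represented by their
extensions (subsets of Delta) under the classical interpretation.\<close>

definition feature_enriched :: "'d set \<Rightarrow> 'f set \<Rightarrow> ('d \<Rightarrow> 'f set) \<Rightarrow> bool" where
  "feature_enriched Delta F pi \<longleftrightarrow>
     finite F \<and>
     (\<forall>d\<in>Delta. pi d \<subset> F) \<and>
     (\<forall>S. S \<subset> F \<longrightarrow> (\<exists>d\<in>Delta. pi d = S))"

text \<open>phi(C) = intersection of pi(d) over d in C; equals F when C is empty.\<close>
definition phi :: "'f set \<Rightarrow> ('d \<Rightarrow> 'f set) \<Rightarrow> 'd set \<Rightarrow> 'f set" where
  "phi F pi C = F \<inter> (\<Inter>d\<in>C. pi d)"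

definition natural :: "'d set \<Rightarrow> 'f set \<Rightarrow> ('d \<Rightarrow> 'f set) \<Rightarrow> 'd set \<Rightarrow> bool" where
  "natural Delta F pi N \<longleftrightarrow> N = {d\<in>Delta. phi F pi N \<subseteq> pi d}"

definition analogy :: "'a set \<Rightarrow> 'a set \<Rightarrow> 'a set \<Rightarrow> 'a set \<Rightarrow> bool" where
  "analogy S1 S2 S3 S4 \<longleftrightarrow> S1 - S2 = S3 - S4 \<and> S2 - S1 = S4 - S3"

end

theory Submission
  imports Defs
begin

text \<open>Between natural concepts, inclusion is exactly reverse inclusion of the
feature sets. An analogical proportion \<open>S\<^sub>1 : S\<^sub>2 :: S\<^sub>3 : S\<^sub>4\<close> transfers
\<open>S\<^sub>3 \<subseteq> S\<^sub>1\<close> to \<open>S\<^sub>4 \<subseteq> S\<^sub>2\<close>, so \<open>A\<^sub>1 \<sqsubseteq> B\<^sub>1\<close> yields \<open>A\<^sub>2 \<sqsubseteq> B\<^sub>2\<close>.\<close>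

lemma phi_antimono:
  assumes "C \<subseteq> D"
  shows "phi F pi D \<subseteq> phi F pi C"
  using assms unfolding phi_def by blast

lemma natural_subset_iff:
  assumes "natural Delta F pi N" and "natural Delta F pi M"
  shows "N \<subseteq> M \<longleftrightarrow> phi F pi M \<subseteq> phi F pi N"
proof
  assume "phi F pi M \<subseteq> phi F pi N"
  then have "{d\<in>Delta. phi F pi N \<subseteq> pi d} \<subseteq> {d\<in>Delta. phi F pi M \<subseteq> pi d}"
    by blast
  with assms show "N \<subseteq> M"
    unfolding natural_def by simp
qed (rule phi_antimono)

lemma analogy_subset:
  assumes "analogy S1 S2 S3 S4" and "S3 \<subseteq> S1"
  shows "S4 \<subseteq> S2"
  using assms unfolding analogy_def by blast

theorem proposition1:
  fixes Delta :: "'d set" and F :: "'f set" and pi :: "'d \<Rightarrow> 'f set"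
    and A1 A2 B1 B2 :: "'d set"
  assumes "feature_enriched Delta F pi"
    and "A1 \<subseteq> Delta" and "A2 \<subseteq> Delta" and "B1 \<subseteq> Delta" and "B2 \<subseteq> Delta"
    and "natural Delta F pi A1" and "natural Delta F pi A2"
    and "natural Delta F pi B1" and "natural Delta F pi B2"
    and "analogy (phi F pi A1) (phi F pi A2) (phi F pi B1) (phi F pi B2)"
    and "A1 \<subseteq> B1"
  shows "A2 \<subseteq> B2"
proof -
  have "phi F pi B1 \<subseteq> phi F pi A1"
    using \<open>A1 \<subseteq> B1\<close> by (rule phi_antimono)
  with assms(10) have "phi F pi B2 \<subseteq> phi F pi A2"
    by (rule analogy_subset)
  with assms(7,9) show ?thesis
    by (simp add: natural_subset_iff)
qed

end
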